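(* Consider the following continuous-time Markov decision process (the bandit process of a self-shared ride-sharing service). Fix parameters $\lambda>0$ (arrival rate), $\mu>0$ (reneging rate), $R>0$ (reward for serving a pair), $\bar R>0$ (reward for a non-shared service) and $C\ge 0$ (reneging penalty), and write $X:=\bar R-C$. The state space is $\{0,1\}$ (number of waiting customers) and in each state an action $a\in\{0,1\}$ is chosen. Under action $a$: in state $0$ the process jumps to state $1$ at rate $a\lambda$ and earns reward rate $0$; in state $1$ the process jumps to state $0$ at total rate $a\lambda+\mu$ and earns reward rate $Ra\lambda+X\mu$ (a pair is served at rate $a\lambda$, earning $R$ per pair; the waiting customer reneges at rate $\mu$, earning $X$). For $\eta\in\mathbb{R}$, the $\eta$-process is the same process in which the reward rate in state $n$ under action $a$ is additionally reduced by $\eta a$. The Whittle index $\eta(n)$ of state $n\in\{0,1\}$ is a value of $\eta$ at which there exist two stationary deterministic policies maximizing the long-run average reward of the $\eta$-process, one taking action $1$ and the other taking action $0$ in state $n$; and the process is Whittle indexable if, for each state $n$, action $1$ in state $n$ is optimal for all $\eta<\eta(n)$ and action $0$ is optimal for all $\eta>\eta(n)$. Then the process is Whittle indexable and its Whittle indices are as follows. If $R<2X$, then $$\eta(0)=\lambda X,\qquad \eta(1)=\frac{\lambda}{2\lambda+\mu}\bigl((\lambda+\mu)R-\mu X\bigr);$$ otherwise (if $R\ge 2X$), $$\eta(0)=\eta(1)=\frac{\lambda}{2\lambda+\mu}\bigl(\lambda R+\mu X\bigr).$$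
   Context: This models a ride-sharing service in which two customers of the same type can share one vehicle: an arriving customer assigned to the service (action $1$) either waits (if nobody is waiting) or departs together with the single waiting customer (if one is waiting); a waiting customer becomes impatient after an exponential time of rate $\mu$ and leaves for a non-shared service, which yields reward $\bar R$ minus penalty $C$. Long-run average reward means $\lim_{T\to\infty}\frac1T\mathbb{E}\int_0^T(\text{reward rate})\,dt$. *)

theory Defs
  imports "HOL-Analysis.Analysis"
begin

text \<open>States are 0 and 1 (number of waiting customers); actions are 0 and 1.
  A stationary deterministic policy is a map d with d 0, d 1 in {0,1}.\<close>

definition valid_policy :: "(nat \<Rightarrow> nat) \<Rightarrow> bool" where
  "valid_policy d \<longleftrightarrow> d 0 \<in> {0,1} \<and> d 1 \<in> {0,1}"

definition jump_rate :: "real \<Rightarrow> real \<Rightarrow> nat \<Rightarrow> nat \<Rightarrow> nat \<Rightarrow> real" where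
  "jump_rate lam mu a n m =
     (if n = 0 \<and> m = 1 then real a * lam
      else if n = 1 \<and> m = 0 then real a * lam + mu
      else 0)"

definition generator :: "real \<Rightarrow> real \<Rightarrow> (nat \<Rightarrow> nat) \<Rightarrow> nat \<Rightarrow> nat \<Rightarrow> real" where
  "generator lam mu d n m =
     (if n = m then - (\<Sum>k\<in>{0,1} - {n}. jump_rate lam mu (d n) n k)
      else jump_rate lam mu (d n) n m)"

fun matpow :: "(nat \<Rightarrow> nat \<Rightarrow> real) \<Rightarrow> nat \<Rightarrow> nat \<Rightarrow> nat \<Rightarrow> real" where
  "matpow Q 0 i j = (if i = j then 1 else 0)"
| "matpow Q (Suc k) i j = (\<Sum>l\<in>{0,1}. matpow Q k i l * Q l j)"

definition trans_prob :: "real \<Rightarrow> real \<Rightarrow> (nat \<Rightarrow> nat) \<Rightarrow> real \<Rightarrow> nat \<Rightarrow> nat \<Rightarrow> real" where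
  "trans_prob lam mu d t i j = (\<Sum>k. t ^ k / fact k * matpow (generator lam mu d) k i j)"

definition reward_rate :: "real \<Rightarrow> real \<Rightarrow> real \<Rightarrow> real \<Rightarrow> real \<Rightarrow> nat \<Rightarrow> nat \<Rightarrow> real" where
  "reward_rate lam mu R X eta a n =
     (if n = 1 then R * real a * lam + X * mu else 0) - eta * real a"

definition avg_reward :: "real \<Rightarrow> real \<Rightarrow> real \<Rightarrow> real \<Rightarrow> real \<Rightarrow> (nat \<Rightarrow> nat) \<Rightarrow> nat \<Rightarrow> real" where
  "avg_reward lam mu R X eta d i =
     Lim at_top (\<lambda>T. (1 / T) * integral {0..T}
        (\<lambda>t. \<Sum>j\<in>{0,1}. trans_prob lam mu d t i j * reward_rate lam mu R X eta (d j) j))"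

definition optimal_policy :: "real \<Rightarrow> real \<Rightarrow> real \<Rightarrow> real \<Rightarrow> real \<Rightarrow> (nat \<Rightarrow> nat) \<Rightarrow> bool" where
  "optimal_policy lam mu R X eta d \<longleftrightarrow> valid_policy d \<and>
     (\<forall>d'. valid_policy d' \<longrightarrow>
        (\<forall>i\<in>{0,1}. avg_reward lam mu R X eta d' i \<le> avg_reward lam mu R X eta d i))"

definition action_optimal :: "real \<Rightarrow> real \<Rightarrow> real \<Rightarrow> real \<Rightarrow> real \<Rightarrow> nat \<Rightarrow> nat \<Rightarrow> bool" where
  "action_optimal lam mu R X eta n a \<longleftrightarrow>
     (\<exists>d. optimal_policy lam mu R X eta d \<and> d n = a)"

definition is_whittle_index :: "real \<Rightarrow> real \<Rightarrow> real \<Rightarrow> real \<Rightarrow> nat \<Rightarrow> real \<Rightarrow> bool" where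
  "is_whittle_index lam mu R X n eta \<longleftrightarrow>
     action_optimal lam mu R X eta n 1 \<and> action_optimal lam mu R X eta n 0"

definition whittle_indexable_with :: "real \<Rightarrow> real \<Rightarrow> real \<Rightarrow> real \<Rightarrow> (nat \<Rightarrow> real) \<Rightarrow> bool" where
  "whittle_indexable_with lam mu R X idx \<longleftrightarrow>
     (\<forall>n\<in>{0,1}. is_whittle_index lam mu R X n (idx n) \<and>
        (\<forall>eta. eta < idx n \<longrightarrow> action_optimal lam mu R X eta n 1) \<and>
        (\<forall>eta. eta > idx n \<longrightarrow> action_optimal lam mu R X eta n 0))"

definition whittle_indexable :: "real \<Rightarrow> real \<Rightarrow> real \<Rightarrow> real \<Rightarrow> bool" where
  "whittle_indexable lam mu R X \<longleftrightarrow> (\<exists>idx. whittle_indexable_with lam mu R X idx)"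

end

theory Submission
  imports Defs "HOL-Real_Asymp.Real_Asymp"
begin

text \<open>For a two-state generator \<open>Q\<close> with total rate \<open>s\<close> one has \<open>Q\<^sup>2 = -s Q\<close>, so
  \<open>exp (t Q) = I + (1 - exp (-s t)) Q / s\<close> and the long-run average reward of a policy is its
  stationary reward, whatever the initial state. Never admitting earns 0, admitting only in
  state 0 earns \<open>p(\<eta>) = \<mu>/(\<lambda>+\<mu>) (\<lambda>X - \<eta>)\<close> and always admitting earns
  \<open>q(\<eta>) = \<lambda>(\<lambda>R+\<mu>X)/(2\<lambda>+\<mu>) - \<eta>\<close>. These three affine functions of \<open>\<eta>\<close> cross pairwise at
  \<open>\<lambda>X\<close>, \<open>\<lambda>(\<lambda>R+\<mu>X)/(2\<lambda>+\<mu>)\<close> and \<open>\<lambda>((\<lambda>+\<mu>)R-\<mu>X)/(2\<lambda>+\<mu>)\<close>, and the sign of \<open>R - 2X\<close>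
  decides in which order; the indices are read off from the upper envelope.\<close>

lemma generator_values:
  "generator lam mu d 0 0 = - (real (d 0) * lam)"
  "generator lam mu d 0 1 = real (d 0) * lam"
  "generator lam mu d 1 0 = real (d 1) * lam + mu"
  "generator lam mu d 1 1 = - (real (d 1) * lam + mu)"
  by (simp_all add: generator_def jump_rate_def)

lemma matpow_two_state_generator:
  assumes Q: "Q 0 0 = -a" "Q 0 1 = a" "Q 1 0 = b" "Q 1 1 = -b" and i: "i \<in> {0,1::nat}"
  shows "j \<in> {0,1} \<Longrightarrow> matpow Q (Suc k) i j = (-(a+b))^k * Q i j"
proof (induction k arbitrary: j)
  case 0
  then show ?case using i by auto
next
  case (Suc k)
  have "matpow Q (Suc (Suc k)) i j = (\<Sum>l\<in>{0,1}. matpow Q (Suc k) i l * Q l j)" by simp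
  also have "\<dots> = (\<Sum>l\<in>{0,1::nat}. (-(a+b))^k * Q i l * Q l j)"
    by (rule sum.cong[OF refl]) (metis Suc.IH mult.assoc)
  also have "\<dots> = (-(a+b))^Suc k * Q i j"
    using i Suc.prems Q by (auto simp: algebra_simps)
  finally show ?case .
qed

lemma exp_series_two_state_generator:
  fixes Q :: "nat \<Rightarrow> nat \<Rightarrow> real"
  assumes Q: "Q 0 0 = -a" "Q 0 1 = a" "Q 1 0 = b" "Q 1 1 = -b"
    and s: "a + b \<noteq> 0" and ij: "i \<in> {0,1}" "j \<in> {0,1}"
  shows "(\<lambda>k. t ^ k / fact k * matpow Q k i j) sums
    ((if i = j then 1 else 0) + Q i j * (1 - exp (- ((a + b) * t))) / (a + b))"
proof -
  define s where "s = a + b"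
  have "s \<noteq> 0" using s by (simp add: s_def)
  define \<delta> where "\<delta> = (if i = j then 1 else 0 :: real)"
  have "(\<lambda>k. (-(s*t))^k / fact k) sums exp (-(s*t))"
    using exp_converges[of "-(s*t)"] by (simp add: divide_inverse mult.commute)
  then have "(\<lambda>k. - Q i j / s * ((-(s*t))^k / fact k) + (if k = 0 then \<delta> + Q i j / s else 0))
      sums (- Q i j / s * exp (-(s*t)) + (\<delta> + Q i j / s))"
    by (intro sums_add sums_mult sums_single)
  moreover have "t ^ k / fact k * matpow Q k i j =
      - Q i j / s * ((-(s*t))^k / fact k) + (if k = 0 then \<delta> + Q i j / s else 0)" for k
  proof (cases k)
    case 0
    then show ?thesis by (simp add: \<delta>_def)
  next
    case (Suc m)
    have "matpow Q k i j = (-s)^m * Q i j"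
      unfolding Suc s_def by (rule matpow_two_state_generator[OF Q ij])
    moreover have "(-(s*t))^k = -s * ((-s)^m * t^k)"
      unfolding Suc by (metis mult_minus_left power_mult_distrib power_Suc mult.assoc)
    ultimately show ?thesis
      using Suc \<open>s \<noteq> 0\<close> by (simp only:) (simp add: field_simps del: fact_Suc power_Suc)
  qed
  ultimately have "(\<lambda>k. t ^ k / fact k * matpow Q k i j) sums
      (- Q i j / s * exp (-(s*t)) + (\<delta> + Q i j / s))"
    by simp
  moreover have "- Q i j / s * exp (-(s*t)) + (\<delta> + Q i j / s) = \<delta> + Q i j * (1 - exp (-(s*t))) / s"
    by (simp add: algebra_simps diff_divide_distrib)
  ultimately show ?thesis
    unfolding s_def \<delta>_def by argo
qed

lemma trans_prob_eq:
  fixes d :: "nat \<Rightarrow> nat"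
  assumes "lam \<ge> 0" "mu > 0" "i \<in> {0,1}" "j \<in> {0,1}"
  defines "s \<equiv> real (d 0) * lam + (real (d 1) * lam + mu)"
  shows "trans_prob lam mu d t i j =
     (if i = j then 1 else 0) + generator lam mu d i j * (1 - exp (- (s * t))) / s"
proof -
  have "real (d 0) * lam + (real (d 1) * lam + mu) > 0"
    using assms by (simp add: add_nonneg_pos)
  then show ?thesis
    unfolding trans_prob_def s_def
    by (intro sums_unique[symmetric] exp_series_two_state_generator[OF generator_values])
      (use assms in auto)
qed

lemma integral_const_minus_exp:
  fixes A c s T :: real
  assumes "s \<noteq> 0" "T \<ge> 0"
  shows "integral {0..T} (\<lambda>t. A - c * exp (-(s*t))) = A * T + c * (exp (-(s*T)) - 1) / s"
proof -
  let ?F = "\<lambda>t. A * t + c * exp (-(s*t)) / s"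
  have "((\<lambda>t. A - c * exp (-(s*t))) has_integral (?F T - ?F 0)) {0..T}"
  proof (rule fundamental_theorem_of_calculus[OF assms(2)])
    fix x :: real
    have "(?F has_real_derivative (A - c * exp (-(s*x)))) (at x within {0..T})"
      using assms(1) by (auto intro!: derivative_eq_intros simp: field_simps)
    then show "(?F has_vector_derivative (A - c * exp (-(s*x)))) (at x within {0..T})"
      by (simp add: has_real_derivative_iff_has_vector_derivative)
  qed
  then show ?thesis
    by (simp add: integral_unique diff_divide_distrib right_diff_distrib)
qed

lemma time_average_const_minus_exp_tendsto:
  fixes A c s :: real
  assumes "s > 0"
  shows "((\<lambda>T. (1 / T) * integral {0..T} (\<lambda>t. A - c * exp (-(s*t)))) \<longlongrightarrow> A) at_top"
proof -
  have "((\<lambda>T. A + (c * (exp (-(s*T)) - 1) / s) / T) \<longlongrightarrow> A + 0) at_top"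
    using assms by (intro tendsto_intros) real_asymp
  moreover have "eventually (\<lambda>T. A + (c * (exp (-(s*T)) - 1) / s) / T =
      (1 / T) * integral {0..T} (\<lambda>t. A - c * exp (-(s*t)))) at_top"
    using eventually_gt_at_top[of 0]
    by eventually_elim (use assms in \<open>simp add: integral_const_minus_exp, simp add: field_simps\<close>)
  ultimately show ?thesis
    by (simp add: tendsto_cong)
qed

text \<open>The chain of policy (x, y) leaves state 0 at rate \<open>a = x\<lambda>\<close> and state 1 at rate
  \<open>b = y\<lambda> + \<mu>\<close>; its stationary distribution is \<open>(b, a) / (a + b)\<close>.\<close>

definition stationary_reward :: "real \<Rightarrow> real \<Rightarrow> real \<Rightarrow> real \<Rightarrow> real \<Rightarrow> nat \<Rightarrow> nat \<Rightarrow> real" where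
  "stationary_reward lam mu R X eta x y =
    ((real y * lam + mu) * reward_rate lam mu R X eta x 0 +
     real x * lam * reward_rate lam mu R X eta y 1) / (real x * lam + (real y * lam + mu))"

lemma avg_reward_eq_stationary_reward:
  fixes d :: "nat \<Rightarrow> nat"
  assumes "lam \<ge> 0" "mu > 0" "i \<in> {0,1}"
  shows "avg_reward lam mu R X eta d i = stationary_reward lam mu R X eta (d 0) (d 1)"
proof -
  define s where "s = real (d 0) * lam + (real (d 1) * lam + mu)"
  define r where "r j = reward_rate lam mu R X eta (d j) j" for j
  define c where "c = (generator lam mu d i 0 * r 0 + generator lam mu d i 1 * r 1) / s"
  have s: "s > 0"
    using assms by (simp add: s_def add_nonneg_pos)
  have tp: "trans_prob lam mu d t i j =
      (if i = j then 1 else 0) + generator lam mu d i j * (1 - exp (-(s*t))) / s"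
    if "j \<in> {0,1}" for j t
    unfolding s_def by (rule trans_prob_eq[OF assms that])
  have integrand: "(\<Sum>j\<in>{0,1}. trans_prob lam mu d t i j * r j) = (r i + c) - c * exp (-(s*t))" for t
    using assms(3) by (auto simp: tp c_def diff_divide_distrib add_divide_distrib algebra_simps)
  have "avg_reward lam mu R X eta d i = r i + c"
    unfolding avg_reward_def r_def[symmetric] integrand
    by (intro tendsto_Lim time_average_const_minus_exp_tendsto s) simp
  also have "r i + c = stationary_reward lam mu R X eta (d 0) (d 1)"
  proof -
    have "i = 0 \<or> i = 1" using assms(3) by blast
    then have "r i + c = ((real (d 1) * lam + mu) * r 0 + real (d 0) * lam * r 1) / s"
      using s by (elim disjE) (simp_all add: c_def generator_values[simplified] s_def field_simps)
    then show ?thesis by (simp add: stationary_reward_def r_def s_def)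
  qed
  finally show ?thesis .
qed

lemma action_optimal_iff_max_stationary_reward:
  assumes "lam \<ge> 0" "mu > 0" "n \<in> {0,1}"
  shows "action_optimal lam mu R X eta n a \<longleftrightarrow>
    (\<exists>x\<in>{0,1}. \<exists>y\<in>{0,1}. (if n = 0 then x else y) = a \<and>
      (\<forall>x'\<in>{0,1}. \<forall>y'\<in>{0,1}.
         stationary_reward lam mu R X eta x' y' \<le> stationary_reward lam mu R X eta x y))"
    (is "_ \<longleftrightarrow> (\<exists>x\<in>{0,1}. \<exists>y\<in>{0,1}. ?acts x y \<and> ?max x y)")
proof
  assume "action_optimal lam mu R X eta n a"
  then obtain d where d: "optimal_policy lam mu R X eta d" "d n = a"
    unfolding action_optimal_def by blast
  then have valid: "d 0 \<in> {0,1}" "d 1 \<in> {0,1}"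
    unfolding optimal_policy_def valid_policy_def by auto
  have "?max (d 0) (d 1)"
  proof (intro ballI)
    fix x' y' :: nat
    assume "x' \<in> {0,1}" "y' \<in> {0,1}"
    then have "valid_policy (\<lambda>k. if k = 0 then x' else y')"
      by (simp add: valid_policy_def)
    with d(1) show "stationary_reward lam mu R X eta x' y' \<le> stationary_reward lam mu R X eta (d 0) (d 1)"
      unfolding optimal_policy_def
      by (force simp: avg_reward_eq_stationary_reward[OF assms(1,2)])
  qed
  moreover have "?acts (d 0) (d 1)"
    using d(2) assms(3) by auto
  ultimately show "\<exists>x\<in>{0,1}. \<exists>y\<in>{0,1}. ?acts x y \<and> ?max x y"
    using valid by blast
next
  assume "\<exists>x\<in>{0,1}. \<exists>y\<in>{0,1}. ?acts x y \<and> ?max x y"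
  then obtain x y where xy: "x \<in> {0,1}" "y \<in> {0,1}" "?acts x y" "?max x y"
    by blast
  define d where "d k = (if k = 0 then x else y)" for k :: nat
  have "optimal_policy lam mu R X eta d"
    unfolding optimal_policy_def
  proof (intro conjI allI impI ballI)
    show "valid_policy d"
      using xy by (simp add: valid_policy_def d_def)
    fix d' i
    assume "valid_policy d'" "i \<in> {0,1::nat}"
    moreover from this(1) have
      "stationary_reward lam mu R X eta (d' 0) (d' 1) \<le> stationary_reward lam mu R X eta x y"
      using xy(4) unfolding valid_policy_def by blast
    ultimately show "avg_reward lam mu R X eta d' i \<le> avg_reward lam mu R X eta d i"
      by (simp add: avg_reward_eq_stationary_reward[OF assms(1,2)] d_def)
  qed
  moreover have "d n = a"
    using xy(3) assms(3) by (auto simp: d_def)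
  ultimately show "action_optimal lam mu R X eta n a"
    unfolding action_optimal_def by blast
qed

lemma stationary_reward_values:
  assumes "lam > 0" "mu > 0"
  shows "stationary_reward lam mu R X eta 0 y = 0"
    and "stationary_reward lam mu R X eta 1 0 = mu / (lam + mu) * (lam * X - eta)"
    and "stationary_reward lam mu R X eta 1 1 = lam * (lam * R + mu * X) / (2 * lam + mu) - eta"
  using assms by (auto simp: stationary_reward_def reward_rate_def field_simps)

text \<open>Never admitting earns 0, so only the policies (1, 0) and (1, 1) compete with it.\<close>

lemma action_optimal_iff_policy_rewards:
  fixes R X eta :: real
  assumes "lam > 0" "mu > 0"
  defines "p \<equiv> stationary_reward lam mu R X eta 1 0"
    and "q \<equiv> stationary_reward lam mu R X eta 1 1"
  shows "action_optimal lam mu R X eta 0 1 \<longleftrightarrow> (0 \<le> p \<and> q \<le> p) \<or> (0 \<le> q \<and> p \<le> q)"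
    and "action_optimal lam mu R X eta 0 0 \<longleftrightarrow> p \<le> 0 \<and> q \<le> 0"
    and "action_optimal lam mu R X eta 1 1 \<longleftrightarrow> (p \<le> 0 \<and> q \<le> 0) \<or> (0 \<le> q \<and> p \<le> q)"
    and "action_optimal lam mu R X eta 1 0 \<longleftrightarrow> (p \<le> 0 \<and> q \<le> 0) \<or> (0 \<le> p \<and> q \<le> p)"
  using assms
  by (simp_all add: action_optimal_iff_max_stationary_reward stationary_reward_values(1); auto)+

lemma pos_mult_sign_iff:
  fixes c x :: real
  assumes "c > 0"
  shows "0 \<le> c * x \<longleftrightarrow> 0 \<le> x" and "c * x \<le> 0 \<longleftrightarrow> x \<le> 0"
  using assms by (auto simp: zero_le_mult_iff mult_le_0_iff)

text \<open>\<open>L\<close>, \<open>K\<close> and \<open>E\<close> are the values of \<open>\<eta>\<close> at which \<open>p\<close>, \<open>q\<close> and \<open>q - p\<close> change sign.\<close>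

lemma action_optimal_iff_thresholds:
  fixes R X eta :: real
  assumes "lam > 0" "mu > 0"
  defines "L \<equiv> lam * X"
    and "K \<equiv> lam / (2 * lam + mu) * (lam * R + mu * X)"
    and "E \<equiv> lam / (2 * lam + mu) * ((lam + mu) * R - mu * X)"
  shows "action_optimal lam mu R X eta 0 1 \<longleftrightarrow> eta \<le> L \<or> eta \<le> K"
    and "action_optimal lam mu R X eta 0 0 \<longleftrightarrow> L \<le> eta \<and> K \<le> eta"
    and "action_optimal lam mu R X eta 1 1 \<longleftrightarrow> (L \<le> eta \<and> K \<le> eta) \<or> (eta \<le> K \<and> eta \<le> E)"
    and "action_optimal lam mu R X eta 1 0 \<longleftrightarrow> (L \<le> eta \<and> K \<le> eta) \<or> (eta \<le> L \<and> E \<le> eta)"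
proof -
  define p where "p = stationary_reward lam mu R X eta 1 0"
  define q where "q = stationary_reward lam mu R X eta 1 1"
  have pos: "lam + mu > 0" "2 * lam + mu > 0"
    using assms(1,2) by auto
  have p: "p = mu / (lam + mu) * (L - eta)" and q: "q = K - eta"
    using stationary_reward_values(2,3)[OF assms(1,2)] by (simp_all add: p_def q_def L_def K_def)
  have qp: "q - p = lam / (lam + mu) * (E - eta)"
    unfolding p q K_def E_def L_def using pos by (simp add: field_simps)
  have "(0 \<le> q - p \<longleftrightarrow> eta \<le> E) \<and> (q - p \<le> 0 \<longleftrightarrow> E \<le> eta)"
    unfolding qp pos_mult_sign_iff[OF divide_pos_pos[OF assms(1) pos(1)]] by simp
  then have "(p \<le> q \<longleftrightarrow> eta \<le> E) \<and> (q \<le> p \<longleftrightarrow> E \<le> eta)"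
    by linarith
  moreover have "(0 \<le> p \<longleftrightarrow> eta \<le> L) \<and> (p \<le> 0 \<longleftrightarrow> L \<le> eta)"
    unfolding p pos_mult_sign_iff[OF divide_pos_pos[OF assms(2) pos(1)]] by simp
  moreover have "(0 \<le> q \<longleftrightarrow> eta \<le> K) \<and> (q \<le> 0 \<longleftrightarrow> K \<le> eta)"
    unfolding q by auto
  ultimately show "action_optimal lam mu R X eta 0 1 \<longleftrightarrow> eta \<le> L \<or> eta \<le> K"
    and "action_optimal lam mu R X eta 0 0 \<longleftrightarrow> L \<le> eta \<and> K \<le> eta"
    and "action_optimal lam mu R X eta 1 1 \<longleftrightarrow> (L \<le> eta \<and> K \<le> eta) \<or> (eta \<le> K \<and> eta \<le> E)"
    and "action_optimal lam mu R X eta 1 0 \<longleftrightarrow> (L \<le> eta \<and> K \<le> eta) \<or> (eta \<le> L \<and> E \<le> eta)"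
    unfolding action_optimal_iff_policy_rewards[OF assms(1,2)] p_def[symmetric] q_def[symmetric]
    by linarith+
qed

lemma whittle_threshold_gaps:
  fixes R X :: real
  assumes "lam > 0" "mu > 0"
  defines "L \<equiv> lam * X"
    and "K \<equiv> lam / (2 * lam + mu) * (lam * R + mu * X)"
    and "E \<equiv> lam / (2 * lam + mu) * ((lam + mu) * R - mu * X)"
  shows "K - L = lam / (2 * lam + mu) * (lam * (R - 2 * X))"
    and "E - K = lam / (2 * lam + mu) * (mu * (R - 2 * X))"
proof -
  show "K - L = lam / (2 * lam + mu) * (lam * (R - 2 * X))"
    using assms(1,2) unfolding L_def K_def by (simp add: field_simps)
  have "E - K = lam / (2 * lam + mu) * (((lam + mu) * R - mu * X) - (lam * R + mu * X))"
    unfolding E_def K_def by (simp only: right_diff_distrib)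
  then show "E - K = lam / (2 * lam + mu) * (mu * (R - 2 * X))"
    by (simp add: algebra_simps)
qed

theorem proposition1:
  fixes lam mu R Rbar C :: real
  assumes "lam > 0" and "mu > 0" and "R > 0" and "Rbar > 0" and "C \<ge> 0"
  defines "X \<equiv> Rbar - C"
  shows "whittle_indexable lam mu R X \<and>
    (R < 2 * X \<longrightarrow> whittle_indexable_with lam mu R X
        (\<lambda>n. if n = 0 then lam * X
             else lam / (2 * lam + mu) * ((lam + mu) * R - mu * X))) \<and>
    (R \<ge> 2 * X \<longrightarrow> whittle_indexable_with lam mu R X
        (\<lambda>n. lam / (2 * lam + mu) * (lam * R + mu * X)))"
proof -
  define L where "L = lam * X"
  define K where "K = lam / (2 * lam + mu) * (lam * R + mu * X)"
  define E where "E = lam / (2 * lam + mu) * ((lam + mu) * R - mu * X)"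
  note thresholds = action_optimal_iff_thresholds[OF assms(1,2), of R X, folded L_def K_def E_def,
    unfolded One_nat_def]
  note gaps = whittle_threshold_gaps[OF assms(1,2), of R X, folded L_def K_def E_def]
  have coeff: "lam / (2 * lam + mu) > 0"
    using assms(1,2) by simp
  have small_pair_reward: "whittle_indexable_with lam mu R X (\<lambda>n. if n = 0 then L else E)"
    if "R < 2 * X"
  proof -
    have "E - K < 0" "K - L < 0"
      unfolding gaps using that assms(1,2) by (intro mult_pos_neg coeff mult_pos_neg; simp)+
    then show ?thesis
      by (auto simp: whittle_indexable_with_def is_whittle_index_def thresholds)
  qed
  have large_pair_reward: "whittle_indexable_with lam mu R X (\<lambda>n. K)" if "R \<ge> 2 * X"
  proof -
    have "0 \<le> E - K" "0 \<le> K - L"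
      unfolding gaps using that assms(1,2) coeff by (intro mult_nonneg_nonneg; simp)+
    then show ?thesis
      by (auto simp: whittle_indexable_with_def is_whittle_index_def thresholds)
  qed
  have "whittle_indexable lam mu R X"
    unfolding whittle_indexable_def using small_pair_reward large_pair_reward by force
  with small_pair_reward large_pair_reward show ?thesis
    unfolding L_def K_def E_def by blast
qed

end
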